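(* Let $\mathcal{A}$ be any deterministic distributed algorithm with advice (with its oracle) that solves Selection in $\psi_S(G)$ rounds on every feasible graph $G$. Then for all integers $k\ge 1$ and $\Delta\ge 5$ there exists a graph $G$ with maximum degree $\Delta$ and $\psi_S(G)=k$ for which $\mathcal{A}$ requires advice of size $\Omega((\Delta-1)^k\log\Delta)$ (i.e., the advice string the oracle gives for $G$ has length at least $c(\Delta-1)^k\log\Delta$ for an absolute constant $c>0$).
   Context: Networks are simple undirected connected graphs without node identifiers; at each node of degree $d$ incident edges have distinct local port numbers $0,\dots,d-1$. Communication is in the synchronous LOCAL model; initially a node knows only its degree. In the advice model an oracle knowing the whole port-labeled graph gives the same binary string to all nodes at the start; its length is the size of advice. A graph is feasible if all nodes have distinct views (the view of $v$ being the infinite tree of all finite paths from $v$ coded by their port-number sequences). Selection: exactly one node outputs "leader" and all others output "non-leader". The Selection index $\psi_S(G)$ is the minimum number of rounds in which Selection can be solved on $G$ by a deterministic algorithm when every node knows the complete map of $G$ (an isomorphic copy with all port numbers). *)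

theory Defs
  imports Complex_Main
begin

text \<open>Port-labeled anonymous networks. Nodes of a graph are represented by the
naturals below pg_n G (the names are invisible to the nodes).
pg_port G v u is the local port number at v of the edge {v,u}.\<close>

record pgraph =
  pg_n    :: nat
  pg_adj  :: "nat \<Rightarrow> nat \<Rightarrow> bool"
  pg_port :: "nat \<Rightarrow> nat \<Rightarrow> nat"

definition deg :: "pgraph \<Rightarrow> nat \<Rightarrow> nat" where
  "deg G v = card {u. u < pg_n G \<and> pg_adj G v u}"

definition maxdeg :: "pgraph \<Rightarrow> nat" where
  "maxdeg G = Max (deg G ` {..<pg_n G})"

definition wf_pgraph :: "pgraph \<Rightarrow> bool" where
  "wf_pgraph G \<longleftrightarrow>
     pg_n G \<ge> 1 \<and>
     (\<forall>u v. pg_adj G u v \<longrightarrow> u < pg_n G \<and> v < pg_n G) \<and>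
     (\<forall>u v. pg_adj G u v \<longrightarrow> pg_adj G v u) \<and>
     (\<forall>v. \<not> pg_adj G v v) \<and>
     (\<forall>u<pg_n G. \<forall>v<pg_n G. (u, v) \<in> {(a, b). pg_adj G a b}\<^sup>*) \<and>
     (\<forall>v<pg_n G. bij_betw (pg_port G v) {u. pg_adj G v u} {0..<deg G v})"

definition nbr :: "pgraph \<Rightarrow> nat \<Rightarrow> nat \<Rightarrow> nat option" where
  "nbr G v p = (if \<exists>u. pg_adj G v u \<and> pg_port G v u = p
                then Some (THE u. pg_adj G v u \<and> pg_port G v u = p) else None)"

text \<open>Follow a path from v coded by its sequence of (outgoing port, incoming port) pairs.\<close>
fun follow :: "pgraph \<Rightarrow> nat \<Rightarrow> (nat \<times> nat) list \<Rightarrow> nat option" where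
  "follow G v [] = Some v"
| "follow G v ((p, q) # ps) =
     (case nbr G v p of
        None \<Rightarrow> None
      | Some u \<Rightarrow> (if pg_port G u v = q then follow G u ps else None))"

text \<open>This is exactly
the information a node has after t rounds in the LOCAL model.\<close>
type_synonym tview = "((nat \<times> nat) list \<times> nat) set"

definition view_trunc :: "pgraph \<Rightarrow> nat \<Rightarrow> nat \<Rightarrow> tview" where
  "view_trunc G t v = {(ps, deg G w) | ps w. length ps \<le> t \<and> follow G v ps = Some w}"

text \<open>Feasible: all nodes have distinct (infinite) views, i.e. distinct views of some depth.\<close>
definition feasible :: "pgraph \<Rightarrow> bool" where
  "feasible G \<longleftrightarrow>
     (\<forall>u<pg_n G. \<forall>v<pg_n G. u \<noteq> v \<longrightarrow> (\<exists>t. view_trunc G t u \<noteq> view_trunc G t v))"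

text \<open>Selection index: minimum t such that some deterministic t-round algorithm
that knows the map of G (so its decision may depend on G, but a node only sees
its view of depth t) elects exactly one leader.\<close>
definition selection_index :: "pgraph \<Rightarrow> nat" where
  "selection_index G =
     (LEAST t. \<exists>f :: tview \<Rightarrow> bool. card {v. v < pg_n G \<and> f (view_trunc G t v)} = 1)"

text \<open>Algorithm with advice: given the advice string (common to all nodes) and the
current view V^t(v) after t rounds, a node either continues (None) or stops with
sel_output Some True (leader) / Some False (non-leader).\<close>
type_synonym algorithm = "bool list \<Rightarrow> tview \<Rightarrow> bool option"
type_synonym advice_map = "pgraph \<Rightarrow> bool list"

definition stop_round :: "algorithm \<Rightarrow> advice_map \<Rightarrow> pgraph \<Rightarrow> nat \<Rightarrow> nat" where
  "stop_round A Orc G v = (LEAST t. A (Orc G) (view_trunc G t v) \<noteq> None)"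

definition sel_output :: "algorithm \<Rightarrow> advice_map \<Rightarrow> pgraph \<Rightarrow> nat \<Rightarrow> bool option" where
  "sel_output A Orc G v = A (Orc G) (view_trunc G (stop_round A Orc G v) v)"

definition solves_selection_in :: "algorithm \<Rightarrow> advice_map \<Rightarrow> pgraph \<Rightarrow> nat \<Rightarrow> bool" where
  "solves_selection_in A Orc G T \<longleftrightarrow>
     (\<forall>v<pg_n G. \<exists>t\<le>T. A (Orc G) (view_trunc G t v) \<noteq> None) \<and>
     card {v. v < pg_n G \<and> sel_output A Orc G v = Some True} = 1"

end

theory Submission
  imports Defs "HOL-Library.FuncSet" "HOL-Library.Discrete_Functions"
begin

text \<open>Let \<open>D = \<Delta> - 1\<close> and let \<open>N = (D + 1)^(D^k)\<close> be the number of labelings of the \<open>D^k\<close>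
  leaves of a complete \<open>D\<close>-ary tree of depth \<open>k\<close> by \<open>{0, \<dots>, D}\<close>. The \<open>j\<close>-th graph of the
  family is a ring of \<open>2 N - 1\<close> nodes, each carrying such a tree whose leaves have as many
  pendant neighbours as their labels; position \<open>2 j\<close> carries labeling \<open>j\<close> and every other
  labeling occurs at two positions. Within \<open>k\<close> rounds only the root of the unique tree is
  distinguished, as it alone sees all of its leaf labels, while within \<open>k - 1\<close> rounds every
  node has a twin. So the graph is feasible with Selection index \<open>k\<close>, and an algorithm
  working in \<open>k\<close> rounds must elect that root. If graphs \<open>i \<noteq> j\<close> received the same advice,
  both copies of the type-\<open>j\<close> root in graph \<open>i\<close> would be elected. Hence the \<open>N\<close> advice
  strings are distinct, and one of them has length at least
  \<open>D^k \<lfloor>log\<^sub>2 \<Delta>\<rfloor> \<ge> (\<Delta> - 1)^k ln \<Delta> / 2\<close>.\<close>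

section \<open>Walks and views\<close>

fun walk :: "('a \<Rightarrow> nat \<Rightarrow> 'a option) \<Rightarrow> ('a \<Rightarrow> 'a \<Rightarrow> nat) \<Rightarrow> 'a \<Rightarrow> (nat \<times> nat) list \<Rightarrow> 'a option" where
  "walk nb pt a [] = Some a"
| "walk nb pt a ((p, q) # ps) =
     (case nb a p of None \<Rightarrow> None
      | Some b \<Rightarrow> (if pt b a = q then walk nb pt b ps else None))"

definition walk_view ::
  "('a \<Rightarrow> nat \<Rightarrow> 'a option) \<Rightarrow> ('a \<Rightarrow> nat) \<Rightarrow> ('a \<Rightarrow> 'a \<Rightarrow> nat) \<Rightarrow> nat \<Rightarrow> 'a \<Rightarrow> tview" where
  "walk_view nb dg pt t a = {(ps, dg x) | ps x. length ps \<le> t \<and> walk nb pt a ps = Some x}"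

lemma walk_append:
  "walk nb pt a (xs @ ys) = (case walk nb pt a xs of None \<Rightarrow> None | Some b \<Rightarrow> walk nb pt b ys)"
  by (induction nb pt a xs rule: walk.induct) (auto split: option.splits)

lemma walk_view_mem:
  "(ps, d) \<in> walk_view nb dg pt t a \<longleftrightarrow> length ps \<le> t \<and> (\<exists>x. walk nb pt a ps = Some x \<and> d = dg x)"
  unfolding walk_view_def by auto

lemma walk_view_restrict:
  "t \<le> t' \<Longrightarrow> walk_view nb dg pt t a = {x \<in> walk_view nb dg pt t' a. length (fst x) \<le> t}"
  unfolding walk_view_def by auto

lemma walk_view_eq_mono:
  "walk_view nb1 dg1 pt1 t' a = walk_view nb2 dg2 pt2 t' b \<Longrightarrow> t \<le> t' \<Longrightarrow>
   walk_view nb1 dg1 pt1 t a = walk_view nb2 dg2 pt2 t b"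
  by (simp add: walk_view_restrict[of t t'])

lemma walk_view_append:
  assumes "walk nb pt a qs = Some y"
  shows "(qs @ rs, d) \<in> walk_view nb dg pt (length qs + t) a \<longleftrightarrow> (rs, d) \<in> walk_view nb dg pt t y"
  using assms by (auto simp: walk_view_mem walk_append)

lemma view_trunc_eq_mono:
  "view_trunc G t' u = view_trunc H t' w \<Longrightarrow> t \<le> t' \<Longrightarrow> view_trunc G t u = view_trunc H t w"
proof -
  have "t \<le> t' \<Longrightarrow> view_trunc G t u = {x \<in> view_trunc G t' u. length (fst x) \<le> t}" for G u
    unfolding view_trunc_def by auto
  then show "view_trunc G t' u = view_trunc H t' w \<Longrightarrow> t \<le> t' \<Longrightarrow> view_trunc G t u = view_trunc H t w"
    by metis
qed

definition graded_bisim ::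
  "(nat \<Rightarrow> 'a \<Rightarrow> 'b \<Rightarrow> bool) \<Rightarrow> ('a \<Rightarrow> nat \<Rightarrow> 'a option) \<Rightarrow> ('a \<Rightarrow> nat) \<Rightarrow> ('a \<Rightarrow> 'a \<Rightarrow> nat)
   \<Rightarrow> ('b \<Rightarrow> nat \<Rightarrow> 'b option) \<Rightarrow> ('b \<Rightarrow> nat) \<Rightarrow> ('b \<Rightarrow> 'b \<Rightarrow> nat) \<Rightarrow> bool" where
  "graded_bisim R nb1 dg1 pt1 nb2 dg2 pt2 \<longleftrightarrow>
     (\<forall>t a b. R t a b \<longrightarrow>
        dg1 a = dg2 b \<and> (\<forall>p. nb1 a p = None \<longleftrightarrow> nb2 b p = None) \<and>
        (0 < t \<longrightarrow> (\<forall>p a' b'. nb1 a p = Some a' \<longrightarrow> nb2 b p = Some b' \<longrightarrow>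
                        pt1 a' a = pt2 b' b \<and> R (t - 1) a' b')))"

lemma walk_graded_bisim:
  assumes bisim: "graded_bisim R nb1 dg1 pt1 nb2 dg2 pt2"
  shows "R t a b \<Longrightarrow> length ps \<le> t \<Longrightarrow>
    (case walk nb1 pt1 a ps of None \<Rightarrow> walk nb2 pt2 b ps = None
     | Some x \<Rightarrow> (\<exists>y. walk nb2 pt2 b ps = Some y \<and> R (t - length ps) x y))"
proof (induction ps arbitrary: t a b)
  case Nil
  then show ?case by simp
next
  case (Cons pq ps)
  obtain p q where pq: "pq = (p, q)" by force
  note step = bisim[unfolded graded_bisim_def, rule_format, OF Cons.prems(1)]
  show ?case
  proof (cases "nb1 a p")
    case None
    then have "nb2 b p = None" using step by simp
    then show ?thesis using None pq by simp
  next
    case (Some a')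
    then have "nb2 b p \<noteq> None" using step by (metis option.distinct(1))
    then obtain b' where b': "nb2 b p = Some b'" by blast
    have ports: "pt1 a' a = pt2 b' b" and R': "R (t - 1) a' b'"
      using step Some b' Cons.prems(2) by auto
    have "case walk nb1 pt1 a' ps of None \<Rightarrow> walk nb2 pt2 b' ps = None
       | Some x \<Rightarrow> (\<exists>y. walk nb2 pt2 b' ps = Some y \<and> R (t - 1 - length ps) x y)"
      using Cons.IH[OF R'] Cons.prems(2) by auto
    then show ?thesis using Some b' ports pq by (auto split: option.splits)
  qed
qed

lemma walk_view_eq_if_graded_bisim:
  assumes bisim: "graded_bisim R nb1 dg1 pt1 nb2 dg2 pt2" and R: "R t a b"
  shows "walk_view nb1 dg1 pt1 t a = walk_view nb2 dg2 pt2 t b"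
proof -
  have deg: "R s x y \<Longrightarrow> dg1 x = dg2 y" for s x y
    using bisim unfolding graded_bisim_def by blast
  note walks = walk_graded_bisim[OF bisim R]
  have "\<exists>y. walk nb2 pt2 b ps = Some y \<and> dg1 x = dg2 y"
    if "length ps \<le> t" "walk nb1 pt1 a ps = Some x" for ps x
    using walks[of ps] that deg by fastforce
  moreover have "\<exists>x. walk nb1 pt1 a ps = Some x \<and> dg1 x = dg2 y"
    if "length ps \<le> t" "walk nb2 pt2 b ps = Some y" for ps y
    using walks[of ps] that deg by (fastforce split: option.splits)
  ultimately show ?thesis unfolding walk_view_def by (auto; metis)
qed

section \<open>Finite port graphs as records\<close>

definition node_code :: "'a set \<Rightarrow> 'a \<Rightarrow> nat" where
  "node_code S = (SOME h. bij_betw h S {..<card S})"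

definition to_pgraph :: "'a set \<Rightarrow> ('a \<Rightarrow> nat \<Rightarrow> 'a option) \<Rightarrow> ('a \<Rightarrow> 'a \<Rightarrow> nat) \<Rightarrow> pgraph" where
  "to_pgraph S nb pt =
     \<lparr>pg_n = card S,
      pg_adj = (\<lambda>u v. u < card S \<and> v < card S \<and>
                  (\<exists>p. nb (inv_into S (node_code S) u) p = Some (inv_into S (node_code S) v))),
      pg_port = (\<lambda>u v. pt (inv_into S (node_code S) u) (inv_into S (node_code S) v))\<rparr>"

locale port_graph =
  fixes S :: "'a set" and nb :: "'a \<Rightarrow> nat \<Rightarrow> 'a option" and dg :: "'a \<Rightarrow> nat"
    and pt :: "'a \<Rightarrow> 'a \<Rightarrow> nat" and r :: 'a
  assumes finite_nodes: "finite S" and root_in: "r \<in> S"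
    and nb_None_iff: "a \<in> S \<Longrightarrow> nb a p = None \<longleftrightarrow> dg a \<le> p"
    and nb_in: "a \<in> S \<Longrightarrow> nb a p = Some b \<Longrightarrow> b \<in> S"
    and port_nb: "a \<in> S \<Longrightarrow> nb a p = Some b \<Longrightarrow> pt a b = p"
    and nb_back: "a \<in> S \<Longrightarrow> nb a p = Some b \<Longrightarrow> nb b (pt b a) = Some a"
    and nb_neq: "a \<in> S \<Longrightarrow> nb a p = Some b \<Longrightarrow> b \<noteq> a"
    and reaches_root: "a \<in> S \<Longrightarrow> (a, r) \<in> {(x, y). x \<in> S \<and> (\<exists>p. nb x p = Some y)}\<^sup>*"
begin

abbreviation "enc \<equiv> node_code S"
abbreviation "dec \<equiv> inv_into S (node_code S)"
abbreviation "G \<equiv> to_pgraph S nb pt"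
abbreviation "E \<equiv> {(x, y). x \<in> S \<and> (\<exists>p. nb x p = Some y)}"
abbreviation "view \<equiv> walk_view nb dg pt"

lemma enc_bij: "bij_betw enc S {..<card S}"
proof -
  have "\<exists>h. bij_betw h S {..<card S}"
    using ex_bij_betw_finite_nat[OF finite_nodes] by (simp add: atLeast0LessThan)
  then show ?thesis unfolding node_code_def by (rule someI_ex)
qed

lemma dec_enc [simp]: "a \<in> S \<Longrightarrow> dec (enc a) = a"
  using enc_bij by (simp add: bij_betw_def)

lemma enc_less [simp]: "a \<in> S \<Longrightarrow> enc a < card S"
  using enc_bij by (auto simp: bij_betw_def)

lemma dec_in [simp]: "v < card S \<Longrightarrow> dec v \<in> S"
  using enc_bij by (metis bij_betw_def inv_into_into lessThan_iff)

lemma enc_dec [simp]: "v < card S \<Longrightarrow> enc (dec v) = v"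
  using enc_bij by (metis bij_betw_def f_inv_into_f lessThan_iff)

lemma enc_inj: "a \<in> S \<Longrightarrow> b \<in> S \<Longrightarrow> enc a = enc b \<longleftrightarrow> a = b"
  by (metis dec_enc)

lemma pg_n_G [simp]: "pg_n G = card S"
  by (simp add: to_pgraph_def)

lemma pg_adj_G: "pg_adj G u v \<longleftrightarrow> u < card S \<and> v < card S \<and> (\<exists>p. nb (dec u) p = Some (dec v))"
  by (simp add: to_pgraph_def)

lemma pg_port_G: "pg_port G u v = pt (dec u) (dec v)"
  by (simp add: to_pgraph_def)

lemma nb_less: "a \<in> S \<Longrightarrow> nb a p = Some b \<Longrightarrow> p < dg a"
  using nb_None_iff by (metis not_le option.distinct(1))

lemma nb_exists: "a \<in> S \<Longrightarrow> p < dg a \<Longrightarrow> \<exists>b. nb a p = Some b"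
  using nb_None_iff by (metis not_le option.exhaust)

lemma card_neighbours: assumes a: "a \<in> S" shows "card {b. \<exists>p. nb a p = Some b} = dg a"
proof -
  have "{b. \<exists>p. nb a p = Some b} = (\<lambda>p. the (nb a p)) ` {..<dg a}"
    using nb_less[OF a] nb_exists[OF a] by force
  moreover have "inj_on (\<lambda>p. the (nb a p)) {..<dg a}"
    by (rule inj_onI) (metis nb_exists[OF a] port_nb[OF a] lessThan_iff option.sel)
  ultimately show ?thesis by (simp add: card_image)
qed

lemma deg_G: assumes v: "v < card S" shows "deg G v = dg (dec v)"
proof -
  have "{u. u < pg_n G \<and> pg_adj G v u} = enc ` {b. \<exists>p. nb (dec v) p = Some b}"
    using v nb_in[of "dec v"] by (auto simp: pg_adj_G intro!: image_eqI[of _ _ "dec u" for u])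
  moreover have "inj_on enc {b. \<exists>p. nb (dec v) p = Some b}"
    using v nb_in[of "dec v"] by (auto intro!: inj_onI simp: enc_inj)
  ultimately show ?thesis unfolding deg_def using card_neighbours[of "dec v"] v by (simp add: card_image)
qed

lemma nbr_G: assumes v: "v < card S" shows "nbr G v p = map_option enc (nb (dec v) p)"
proof (cases "nb (dec v) p")
  case None
  then have "\<not> (\<exists>u. pg_adj G v u \<and> pg_port G v u = p)"
    using port_nb[of "dec v"] v by (auto simp: pg_adj_G pg_port_G)
  then show ?thesis unfolding nbr_def using None by simp
next
  case (Some b)
  have "b \<in> S" using nb_in[OF dec_in[OF v] Some] .
  then have P: "pg_adj G v (enc b) \<and> pg_port G v (enc b) = p"
    using Some v port_nb[of "dec v"] by (auto simp: pg_adj_G pg_port_G)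
  have "u = enc b" if "pg_adj G v u \<and> pg_port G v u = p" for u
    using that Some v port_nb[of "dec v"] by (auto simp: pg_adj_G pg_port_G)
  then have "(THE u. pg_adj G v u \<and> pg_port G v u = p) = enc b"
    using P by (rule the_equality[rotated])
  then show ?thesis unfolding nbr_def using P Some by auto
qed

lemma walk_in: "a \<in> S \<Longrightarrow> walk nb pt a ps = Some x \<Longrightarrow> x \<in> S"
proof (induction ps arbitrary: a)
  case Nil then show ?case by simp
next
  case (Cons pq ps)
  then show ?case by (cases pq) (auto split: option.splits if_splits dest: nb_in)
qed

lemma follow_G: "v < card S \<Longrightarrow> follow G v ps = map_option enc (walk nb pt (dec v) ps)"
proof (induction ps arbitrary: v)
  case Nil
  then show ?case by simp
next
  case (Cons pq ps)
  obtain p q where pq: "pq = (p, q)" by force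
  show ?case
  proof (cases "nb (dec v) p")
    case None
    then show ?thesis using Cons pq by (simp add: nbr_G)
  next
    case (Some b)
    then have "b \<in> S" using nb_in[OF dec_in[OF Cons.prems]] by blast
    then show ?thesis using Cons pq Some by (simp add: nbr_G pg_port_G)
  qed
qed

lemma view_trunc_G: assumes v: "v < card S" shows "view_trunc G t v = view t (dec v)"
  unfolding view_trunc_def walk_view_def
proof safe
  fix ps w assume "length ps \<le> t" "follow G v ps = Some w"
  then show "\<exists>ps' x. (ps, deg G w) = (ps', dg x) \<and> length ps' \<le> t \<and> walk nb pt (dec v) ps' = Some x"
    using v follow_G[OF v] walk_in[of "dec v"] by (auto simp: deg_G)
next
  fix ps x assume "length ps \<le> t" "walk nb pt (dec v) ps = Some x"
  then show "\<exists>ps' w. (ps, dg x) = (ps', deg G w) \<and> length ps' \<le> t \<and> follow G v ps' = Some w"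
    using v follow_G[OF v] walk_in[of "dec v"] by (auto simp: deg_G intro!: exI[of _ "enc x"])
qed

lemma view_trunc_G_enc: "a \<in> S \<Longrightarrow> view_trunc G t (enc a) = view t a"
  using view_trunc_G[of "enc a"] by simp

lemma E_sym: assumes "(x, y) \<in> E" shows "(y, x) \<in> E"
proof -
  obtain p where "x \<in> S" "nb x p = Some y" using assms by blast
  then show ?thesis using nb_in nb_back by blast
qed

lemma E_connected: assumes "a \<in> S" "b \<in> S" shows "(a, b) \<in> E\<^sup>*"
proof -
  have "E\<inverse> = E" using E_sym by blast
  moreover have "(r, b) \<in> (E\<inverse>)\<^sup>*" using reaches_root[OF assms(2)] by (simp add: rtrancl_converse)
  ultimately have "(r, b) \<in> E\<^sup>*" by simp
  then show ?thesis using reaches_root[OF assms(1)] by (meson rtrancl_trans)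
qed

lemma G_connected: "(x, y) \<in> E\<^sup>* \<Longrightarrow> y \<in> S \<Longrightarrow> (enc x, enc y) \<in> {(a, b). pg_adj G a b}\<^sup>*"
proof (induction rule: converse_rtrancl_induct)
  case base then show ?case by simp
next
  case (step x z)
  then have "pg_adj G (enc x) (enc z)" using nb_in by (auto simp: pg_adj_G)
  then show ?case using step by (meson case_prodI converse_rtrancl_into_rtrancl mem_Collect_eq)
qed

lemma port_G_bij: assumes v: "v < card S" shows "bij_betw (pg_port G v) {u. pg_adj G v u} {0..<deg G v}"
  unfolding bij_betw_def
proof
  have vS: "dec v \<in> S" using v by simp
  show "inj_on (pg_port G v) {u. pg_adj G v u}"
  proof (rule inj_onI)
    fix x y assume "x \<in> {u. pg_adj G v u}" "y \<in> {u. pg_adj G v u}" "pg_port G v x = pg_port G v y"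
    then show "x = y" using port_nb[OF vS] by (auto simp: pg_adj_G pg_port_G) (metis enc_dec option.inject)
  qed
  show "pg_port G v ` {u. pg_adj G v u} = {0..<deg G v}"
  proof (rule set_eqI, rule iffI)
    fix q assume "q \<in> pg_port G v ` {u. pg_adj G v u}"
    then show "q \<in> {0..<deg G v}" using v port_nb[OF vS] nb_less[OF vS] by (auto simp: pg_port_G pg_adj_G deg_G)
  next
    fix p assume "p \<in> {0..<deg G v}"
    then obtain b where b: "nb (dec v) p = Some b" using nb_exists[OF vS] v by (auto simp: deg_G)
    then have "pg_adj G v (enc b) \<and> pg_port G v (enc b) = p"
      using v nb_in[OF vS b] port_nb[OF vS b] by (auto simp: pg_adj_G pg_port_G)
    then show "p \<in> pg_port G v ` {u. pg_adj G v u}" by force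
  qed
qed

lemma wf_pgraph_G: "wf_pgraph G"
  unfolding wf_pgraph_def
proof (intro conjI allI impI)
  have "card S > 0" using root_in finite_nodes card_gt_0_iff by blast
  then show "1 \<le> pg_n G" by simp
next
  fix u v assume "pg_adj G u v"
  then show "u < pg_n G" "v < pg_n G" by (auto simp: pg_adj_G)
next
  fix u v assume "pg_adj G u v"
  then obtain p where "u < card S" "v < card S" "nb (dec u) p = Some (dec v)" by (auto simp: pg_adj_G)
  then show "pg_adj G v u" using nb_back[OF dec_in] by (auto simp: pg_adj_G)
next
  fix v show "\<not> pg_adj G v v" using nb_neq[OF dec_in] by (auto simp: pg_adj_G)
next
  fix u v assume "u < pg_n G" "v < pg_n G"
  then show "(u, v) \<in> {(a, b). pg_adj G a b}\<^sup>*"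
    using G_connected[OF E_connected[of "dec u" "dec v"]] by simp
next
  fix v assume "v < pg_n G"
  then show "bij_betw (pg_port G v) {u. pg_adj G v u} {0..<deg G v}" using port_G_bij by simp
qed

lemma maxdeg_G: "maxdeg G = Max (dg ` S)"
proof -
  have "deg G ` {..<pg_n G} = dg ` S"
  proof (rule set_eqI, rule iffI)
    fix d assume "d \<in> deg G ` {..<pg_n G}"
    then show "d \<in> dg ` S" by (auto simp: deg_G)
  next
    fix d assume "d \<in> dg ` S"
    then obtain a where "a \<in> S" "d = deg G (enc a)" by (auto simp: deg_G)
    then show "d \<in> deg G ` {..<pg_n G}" by simp
  qed
  then show ?thesis unfolding maxdeg_def by simp
qed

lemma walk_exists: "(a, x) \<in> E\<^sup>* \<Longrightarrow> \<exists>qs. walk nb pt a qs = Some x"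
proof (induction rule: converse_rtrancl_induct)
  case base
  show ?case by (rule exI[of _ "[]"]) simp
next
  case (step y z)
  then obtain p qs where "nb y p = Some z" "walk nb pt z qs = Some x" by blast
  then have "walk nb pt y ((p, pt z y) # qs) = Some x" by simp
  then show ?case by blast
qed

lemma walk_inj: "a \<in> S \<Longrightarrow> b \<in> S \<Longrightarrow> walk nb pt a qs = Some x \<Longrightarrow> walk nb pt b qs = Some x \<Longrightarrow> a = b"
proof (induction qs arbitrary: a b)
  case Nil
  then show ?case by simp
next
  case (Cons pq qs)
  obtain p q where pq: "pq = (p, q)" by force
  obtain a' where a': "nb a p = Some a'" "pt a' a = q" "walk nb pt a' qs = Some x"
    using Cons.prems pq by (auto split: option.splits if_splits)
  obtain b' where b': "nb b p = Some b'" "pt b' b = q" "walk nb pt b' qs = Some x"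
    using Cons.prems pq by (auto split: option.splits if_splits)
  have "a' = b'" using Cons nb_in a' b' by blast
  then show ?case using nb_back[OF \<open>a \<in> S\<close> a'(1)] nb_back[OF \<open>b \<in> S\<close> b'(1)] a' b' by simp
qed

text \<open>Walking from two nodes along a common path to \<open>x\<close> separates them, as walks are injective.\<close>

lemma feasible_G_if_unique_view:
  assumes xS: "x \<in> S" and uniq: "\<forall>a\<in>S. a \<noteq> x \<longrightarrow> view K a \<noteq> view K x"
  shows "feasible G"
  unfolding feasible_def
proof (intro allI impI)
  fix u v assume u: "u < pg_n G" and v: "v < pg_n G" and uv: "u \<noteq> v"
  let ?a = "dec u" and ?b = "dec v"
  have aS: "?a \<in> S" and bS: "?b \<in> S" and ab: "?a \<noteq> ?b" using u v uv by (auto, metis enc_dec)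
  obtain qs where qs: "walk nb pt ?a qs = Some x" using walk_exists E_connected[OF aS xS] by blast
  let ?t = "length qs + K"
  have "view ?t ?a \<noteq> view ?t ?b"
  proof
    assume eq: "view ?t ?a = view ?t ?b"
    have "(qs, dg x) \<in> view ?t ?a" using qs by (simp add: walk_view_mem)
    then have "(qs, dg x) \<in> view ?t ?b" using eq by simp
    then obtain y where y: "walk nb pt ?b qs = Some y" by (auto simp: walk_view_mem)
    have "(rs, d) \<in> view K y \<longleftrightarrow> (rs, d) \<in> view K x" for rs d
      using walk_view_append[OF y] walk_view_append[OF qs] eq by blast
    then have "view K y = view K x" by auto
    then have "y = x" using uniq walk_in[OF bS y] by blast
    then show False using walk_inj[OF aS bS qs] y ab by simp
  qed
  then show "\<exists>t. view_trunc G t u \<noteq> view_trunc G t v" using u v by (auto simp: view_trunc_G)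
qed

lemma selection_index_G:
  assumes xS: "x \<in> S" and uniq: "\<forall>a\<in>S. a \<noteq> x \<longrightarrow> view K a \<noteq> view K x"
    and twin: "\<forall>a\<in>S. \<exists>b\<in>S. b \<noteq> a \<and> view (K - 1) b = view (K - 1) a"
    and K: "1 \<le> K"
  shows "selection_index G = K"
  unfolding selection_index_def
proof (rule Least_equality)
  have "{v. v < pg_n G \<and> view_trunc G K v = view_trunc G K (enc x)} = {enc x}"
    using xS uniq by (auto simp: view_trunc_G) (metis dec_in enc_dec)
  then show "\<exists>f. card {v. v < pg_n G \<and> f (view_trunc G K v)} = 1"
    by (intro exI[of _ "\<lambda>V. V = view_trunc G K (enc x)"]) simp
next
  fix t assume "\<exists>f. card {v. v < pg_n G \<and> f (view_trunc G t v)} = 1"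
  then obtain f v where V: "{v. v < pg_n G \<and> f (view_trunc G t v)} = {v}"
    by (metis card_1_singletonE)
  then have v: "v < card S" and fv: "f (view_trunc G t v)" by auto
  show "K \<le> t"
  proof (rule ccontr)
    assume "\<not> K \<le> t"
    obtain b where bS: "b \<in> S" and bne: "b \<noteq> dec v" and eq: "view (K - 1) b = view (K - 1) (dec v)"
      using twin dec_in[OF v] by blast
    have "view t b = view t (dec v)" using walk_view_eq_mono[OF eq] \<open>\<not> K \<le> t\<close> by simp
    then have "view_trunc G t (enc b) = view_trunc G t v" using bS v by (simp add: view_trunc_G)
    then have "enc b = v" using V fv bS by auto
    then show False using bne bS by auto
  qed
qed

end

section \<open>Selection with advice\<close>

lemma sel_output_eq_if_view_trunc_eq:
  assumes eq: "view_trunc G T u = view_trunc H T w" and t0: "t0 \<le> T"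
    and stops: "A s (view_trunc G t0 u) \<noteq> None" and adv: "Orc G = s" "Orc H = s"
  shows "sel_output A Orc G u = sel_output A Orc H w"
proof -
  have V: "t \<le> T \<Longrightarrow> view_trunc G t u = view_trunc H t w" for t
    using view_trunc_eq_mono[OF eq] .
  define m where "m = (LEAST t. A s (view_trunc G t u) \<noteq> None)"
  have m: "m \<le> t0" "A s (view_trunc G m u) \<noteq> None"
    unfolding m_def using stops by (auto intro: Least_le LeastI)
  have "(LEAST t. A s (view_trunc H t w) \<noteq> None) = m"
  proof (rule Least_equality)
    show "A s (view_trunc H m w) \<noteq> None" using m V[of m] t0 by simp
  next
    fix y assume y: "A s (view_trunc H y w) \<noteq> None"
    show "m \<le> y"
    proof (rule ccontr)
      assume "\<not> m \<le> y"
      then have "A s (view_trunc G y u) \<noteq> None" using y V[of y] m t0 by simp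
      then show False using \<open>\<not> m \<le> y\<close> unfolding m_def by (meson Least_le)
    qed
  qed
  then have "stop_round A Orc H w = m" "stop_round A Orc G u = m"
    unfolding stop_round_def m_def adv by simp_all
  then show ?thesis unfolding sel_output_def using V[of m] m t0 adv by simp
qed

lemma leader_has_unique_view:
  assumes sol: "solves_selection_in A Orc G T"
  shows "\<exists>l<pg_n G. sel_output A Orc G l = Some True \<and>
           (\<forall>v<pg_n G. v \<noteq> l \<longrightarrow> view_trunc G T v \<noteq> view_trunc G T l)"
proof -
  obtain l where L: "{v. v < pg_n G \<and> sel_output A Orc G v = Some True} = {l}"
    using sol unfolding solves_selection_in_def by (metis card_1_singletonE)
  then have l: "l < pg_n G" "sel_output A Orc G l = Some True" by auto
  obtain t0 where t0: "t0 \<le> T" "A (Orc G) (view_trunc G t0 l) \<noteq> None"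
    using sol l unfolding solves_selection_in_def by blast
  have "sel_output A Orc G v \<noteq> Some True" if "v < pg_n G" "v \<noteq> l" for v
    using L that by blast
  then have "view_trunc G T v \<noteq> view_trunc G T l" if "v < pg_n G" "v \<noteq> l" for v
    using that sel_output_eq_if_view_trunc_eq[of G T l G v t0 A "Orc G" Orc] t0 l by metis
  then show ?thesis using l by blast
qed

section \<open>Rings of labelled trees\<close>

text \<open>The graph with parameters \<open>k D M lab\<close>: a ring \<open>Ring 0, \<dots>, Ring (M - 1)\<close>; ring node \<open>g\<close>
  carries a complete \<open>D\<close>-ary tree of depth \<open>k\<close> with nodes \<open>Tree g ps\<close>, where \<open>ps\<close> is the branch
  from the root listed in reverse (so \<open>last ps\<close> is the first step); the leaf \<open>Tree g L\<close> carries
  the pendant nodes \<open>Pendant g L e\<close>, \<open>e < lab g L\<close>. Ports: at a ring node 0 and 1 lead to the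
  next and previous ring node and 2 to the root; at the root \<open>p < D\<close> leads to child \<open>p\<close> and \<open>D\<close>
  to the ring; at any other tree node 0 leads to the parent and \<open>p + 1\<close> to child or pendant \<open>p\<close>.\<close>

datatype node = Ring nat | Tree nat "nat list" | Pendant nat "nat list" nat

definition tree_paths :: "nat \<Rightarrow> nat \<Rightarrow> nat list set" where
  "tree_paths k D = {ps. length ps \<le> k \<and> set ps \<subseteq> {..<D}}"

definition leaf_paths :: "nat \<Rightarrow> nat \<Rightarrow> nat list set" where
  "leaf_paths k D = {ps. length ps = k \<and> set ps \<subseteq> {..<D}}"

definition rt_nodes :: "nat \<Rightarrow> nat \<Rightarrow> nat \<Rightarrow> (nat \<Rightarrow> nat list \<Rightarrow> nat) \<Rightarrow> node set" where
  "rt_nodes k D M lab = {Ring a | a. a < M} \<union> {Tree g ps | g ps. g < M \<and> ps \<in> tree_paths k D}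
     \<union> {Pendant g L e | g L e. g < M \<and> L \<in> leaf_paths k D \<and> e < lab g L}"

fun rt_nb :: "nat \<Rightarrow> nat \<Rightarrow> nat \<Rightarrow> (nat \<Rightarrow> nat list \<Rightarrow> nat) \<Rightarrow> node \<Rightarrow> nat \<Rightarrow> node option" where
  "rt_nb k D M lab (Ring a) p =
     (if p = 0 then Some (Ring (Suc a mod M)) else if p = 1 then Some (Ring ((a + M - 1) mod M))
      else if p = 2 then Some (Tree a []) else None)"
| "rt_nb k D M lab (Tree g ps) p =
     (if ps = [] then (if p < D then Some (Tree g [p]) else if p = D then Some (Ring g) else None)
      else if p = 0 then Some (Tree g (tl ps))
      else if length ps < k then (if p \<le> D then Some (Tree g ((p - 1) # ps)) else None)
      else (if p \<le> lab g ps then Some (Pendant g ps (p - 1)) else None))"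
| "rt_nb k D M lab (Pendant g L e) p = (if p = 0 then Some (Tree g L) else None)"

fun rt_deg :: "nat \<Rightarrow> nat \<Rightarrow> (nat \<Rightarrow> nat list \<Rightarrow> nat) \<Rightarrow> node \<Rightarrow> nat" where
  "rt_deg k D lab (Ring a) = 3"
| "rt_deg k D lab (Tree g ps) = (if length ps < k then Suc D else Suc (lab g ps))"
| "rt_deg k D lab (Pendant g L e) = 1"

fun rt_port :: "nat \<Rightarrow> nat \<Rightarrow> node \<Rightarrow> node \<Rightarrow> nat" where
  "rt_port D M (Ring a) b = (case b of Ring c \<Rightarrow> (if c = Suc a mod M then 0 else 1) | _ \<Rightarrow> 2)"
| "rt_port D M (Tree g ps) b =
     (case b of Ring _ \<Rightarrow> D
      | Tree _ qs \<Rightarrow> (if ps = [] then hd qs else if qs = tl ps then 0 else Suc (hd qs))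
      | Pendant _ _ e \<Rightarrow> Suc e)"
| "rt_port D M (Pendant g L e) b = 0"

definition rt_params :: "nat \<Rightarrow> nat \<Rightarrow> nat \<Rightarrow> (nat \<Rightarrow> nat list \<Rightarrow> nat) \<Rightarrow> bool" where
  "rt_params k D M lab \<longleftrightarrow> 1 \<le> k \<and> 4 \<le> D \<and> 3 \<le> M \<and> (\<forall>g L. L \<in> leaf_paths k D \<longrightarrow> lab g L \<le> D)"

lemma ring_mod_facts:
  assumes "a < M" "3 \<le> (M::nat)"
  shows "(Suc a mod M + M - 1) mod M = a" "Suc ((a + M - 1) mod M) mod M = a"
    "(a + M - 1) mod M \<noteq> Suc a mod M" "Suc a mod M \<noteq> a" "(a + M - 1) mod M \<noteq> a"
    "Suc (Suc a mod M) mod M \<noteq> a" "Suc a mod M < M" "(a + M - 1) mod M < M"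
proof -
  have sm: "Suc a mod M = (if Suc a = M then 0 else Suc a)" using assms by (simp add: mod_if)
  have am: "(a + M - 1) mod M = (if a = 0 then M - 1 else a - 1)"
  proof (cases "a = 0")
    case False
    then have "a + M - 1 = (a - 1) + M" using assms by simp
    moreover have "(a - 1 + M) mod M = a - 1"
      using False assms by (metis mod_add_self2 mod_less less_imp_diff_less)
    ultimately show ?thesis using False by simp
  qed (use assms in simp)
  show "(Suc a mod M + M - 1) mod M = a" "Suc ((a + M - 1) mod M) mod M = a"
    "(a + M - 1) mod M \<noteq> Suc a mod M" "Suc a mod M \<noteq> a" "(a + M - 1) mod M \<noteq> a"
    "Suc a mod M < M" "(a + M - 1) mod M < M"
    using sm am assms by (auto simp: mod_if)
  show "Suc (Suc a mod M) mod M \<noteq> a" using sm assms by (auto simp: mod_if)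
qed

lemma tree_paths_Cons: "c # ps \<in> tree_paths k D \<longleftrightarrow> c < D \<and> Suc (length ps) \<le> k \<and> ps \<in> tree_paths k D"
  unfolding tree_paths_def by auto

lemma tree_paths_tl: "ps \<in> tree_paths k D \<Longrightarrow> tl ps \<in> tree_paths k D"
  unfolding tree_paths_def by (cases ps) auto

lemma leaf_paths_tree_paths: "L \<in> leaf_paths k D \<Longrightarrow> L \<in> tree_paths k D"
  unfolding tree_paths_def leaf_paths_def by auto

lemma tree_paths_leaf: "ps \<in> tree_paths k D \<Longrightarrow> \<not> length ps < k \<Longrightarrow> ps \<in> leaf_paths k D"
  unfolding tree_paths_def leaf_paths_def by auto

lemma finite_leaf_paths: "finite (leaf_paths k D)"
  unfolding leaf_paths_def using finite_lists_length_eq[of "{..<D}" k] by (simp add: conj_commute)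

lemma card_leaf_paths: "card (leaf_paths k D) = D ^ k"
  unfolding leaf_paths_def using card_lists_length_eq[of "{..<D}" k] by (simp add: conj_commute)

lemma Ring_in_rt_nodes [simp]: "Ring a \<in> rt_nodes k D M lab \<longleftrightarrow> a < M"
  unfolding rt_nodes_def by auto

lemma Tree_in_rt_nodes [simp]: "Tree g ps \<in> rt_nodes k D M lab \<longleftrightarrow> g < M \<and> ps \<in> tree_paths k D"
  unfolding rt_nodes_def by auto

lemma Pendant_in_rt_nodes [simp]:
  "Pendant g L e \<in> rt_nodes k D M lab \<longleftrightarrow> g < M \<and> L \<in> leaf_paths k D \<and> e < lab g L"
  unfolding rt_nodes_def by auto

lemma finite_rt_nodes: "finite (rt_nodes k D M lab)"
proof -
  have "finite (tree_paths k D)"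
    unfolding tree_paths_def using finite_lists_length_le[of "{..<D}" k] by (simp add: conj_commute)
  moreover have "{Tree g ps | g ps. g < M \<and> ps \<in> tree_paths k D} = (\<lambda>(g, ps). Tree g ps) ` ({..<M} \<times> tree_paths k D)"
    by auto
  ultimately have "finite {Tree g ps | g ps. g < M \<and> ps \<in> tree_paths k D}" by simp
  moreover define m where "m = Max ((\<lambda>(g, L). lab g L) ` ({..<M} \<times> leaf_paths k D))"
  have "{Pendant g L e | g L e. g < M \<and> L \<in> leaf_paths k D \<and> e < lab g L} \<subseteq>
      (\<lambda>(g, L, e). Pendant g L e) ` ({..<M} \<times> leaf_paths k D \<times> {..<m})"
  proof
    fix x assume "x \<in> {Pendant g L e | g L e. g < M \<and> L \<in> leaf_paths k D \<and> e < lab g L}"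
    then obtain g L e where x: "x = Pendant g L e" "g < M" "L \<in> leaf_paths k D" "e < lab g L" by blast
    moreover have "lab g L \<le> m" unfolding m_def using x finite_leaf_paths by (intro Max_ge) auto
    ultimately show "x \<in> (\<lambda>(g, L, e). Pendant g L e) ` ({..<M} \<times> leaf_paths k D \<times> {..<m})"
      by (auto intro!: image_eqI[of _ _ "(g, L, e)"])
  qed
  then have "finite {Pendant g L e | g L e. g < M \<and> L \<in> leaf_paths k D \<and> e < lab g L}"
    by (rule finite_subset) (intro finite_imageI finite_cartesian_product finite_leaf_paths finite_lessThan)
  moreover have "{Ring a | a. a < M} = Ring ` {..<M}" by auto
  ultimately show ?thesis unfolding rt_nodes_def by simp
qed

context
  fixes k D M :: nat and lab :: "nat \<Rightarrow> nat list \<Rightarrow> nat"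
  assumes params: "rt_params k D M lab"
begin

abbreviation "nodes \<equiv> rt_nodes k D M lab"
abbreviation "nb \<equiv> rt_nb k D M lab"

lemma params_k: "1 \<le> k" and params_D: "4 \<le> D" and params_M: "3 \<le> M"
  using params unfolding rt_params_def by auto

lemma rt_nb_None_iff: "a \<in> nodes \<Longrightarrow> nb a p = None \<longleftrightarrow> rt_deg k D lab a \<le> p"
  using params_k by (cases a) auto

lemma rt_nb_in: "a \<in> nodes \<Longrightarrow> nb a p = Some b \<Longrightarrow> b \<in> nodes"
proof (cases a)
  case (Ring x)
  assume "a \<in> nodes" "nb a p = Some b"
  then show ?thesis using Ring ring_mod_facts[of x M] params_M by (auto split: if_splits simp: tree_paths_def)
next
  case (Tree g ps)
  assume a: "a \<in> nodes" and b: "nb a p = Some b"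
  then have "g < M" "ps \<in> tree_paths k D" using Tree by auto
  then show ?thesis
    using Tree b params_k tree_paths_tl[of ps k D]
    by (cases "ps = []") (auto split: if_splits simp: tree_paths_def leaf_paths_def)
next
  case (Pendant g L e)
  assume "a \<in> nodes" "nb a p = Some b"
  then show ?thesis using Pendant by (auto split: if_splits simp: leaf_paths_tree_paths)
qed

lemma rt_port_nb: "a \<in> nodes \<Longrightarrow> nb a p = Some b \<Longrightarrow> rt_port D M a b = p"
proof (cases a)
  case (Ring x)
  assume "a \<in> nodes" "nb a p = Some b"
  then show ?thesis using Ring ring_mod_facts[of x M] params_M by (auto split: if_splits)
next
  case (Tree g ps)
  assume "nb a p = Some b"
  moreover have "ps \<noteq> [] \<Longrightarrow> tl ps \<noteq> (p - 1) # ps" by (cases ps) auto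
  ultimately show ?thesis using Tree by (auto split: if_splits)
qed (auto split: if_splits)

lemma rt_nb_back: "a \<in> nodes \<Longrightarrow> nb a p = Some b \<Longrightarrow> nb b (rt_port D M b a) = Some a"
proof (cases a)
  case (Ring x)
  assume "a \<in> nodes" "nb a p = Some b"
  then show ?thesis using Ring ring_mod_facts[of x M] params_M by (auto split: if_splits)
next
  case (Tree g ps)
  assume a: "a \<in> nodes" and b: "nb a p = Some b"
  show ?thesis
  proof (cases ps)
    case Nil then show ?thesis using Tree b params_k by (auto split: if_splits)
  next
    case (Cons c qs)
    then have "c < D" "length qs < k" using a Tree by (auto simp: tree_paths_def)
    then show ?thesis using Tree b Cons by (cases qs) (auto split: if_splits)
  qed
next
  case (Pendant g L e)
  assume a: "a \<in> nodes" and b: "nb a p = Some b"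
  then have "L \<noteq> [] \<and> \<not> length L < k" using Pendant params_k by (auto simp: leaf_paths_def)
  then show ?thesis using Pendant a b by (auto split: if_splits)
qed

lemma rt_nb_neq: "a \<in> nodes \<Longrightarrow> nb a p = Some b \<Longrightarrow> b \<noteq> a"
proof (cases a)
  case (Ring x)
  assume "a \<in> nodes" "nb a p = Some b"
  then show ?thesis using Ring ring_mod_facts[of x M] params_M by (auto split: if_splits)
next
  case (Tree g ps)
  assume "nb a p = Some b"
  then show ?thesis using Tree by (cases ps) (auto split: if_splits)
qed (auto split: if_splits)

abbreviation "edges \<equiv> {(x, y). x \<in> nodes \<and> (\<exists>p. nb x p = Some y)}"

lemma Ring_reaches_Ring0: "a < M \<Longrightarrow> (Ring a, Ring 0) \<in> edges\<^sup>*"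
proof (induction a)
  case (Suc a)
  have "(Ring (Suc a), Ring a) \<in> edges"
    using Suc.prems by (auto intro: exI[of _ 1])
  then show ?case using Suc by (meson Suc_lessD converse_rtrancl_into_rtrancl)
qed simp

lemma Tree_reaches_Ring0: "g < M \<Longrightarrow> ps \<in> tree_paths k D \<Longrightarrow> (Tree g ps, Ring 0) \<in> edges\<^sup>*"
proof (induction ps)
  case Nil
  have "(Tree g [], Ring g) \<in> edges" using Nil by (auto simp: tree_paths_def intro: exI[of _ D])
  then show ?case using Ring_reaches_Ring0[OF Nil(1)] by (meson converse_rtrancl_into_rtrancl)
next
  case (Cons c ps)
  then have "(Tree g (c # ps), Tree g ps) \<in> edges" "ps \<in> tree_paths k D"
    by (auto simp: tree_paths_Cons intro: exI[of _ 0])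
  then show ?case using Cons by (meson converse_rtrancl_into_rtrancl)
qed

lemma rt_reaches_Ring0: "a \<in> nodes \<Longrightarrow> (a, Ring 0) \<in> edges\<^sup>*"
proof (cases a)
  case (Pendant g L e)
  assume a: "a \<in> nodes"
  then have "(a, Tree g L) \<in> edges" using Pendant by (auto intro: exI[of _ 0])
  moreover have "(Tree g L, Ring 0) \<in> edges\<^sup>*"
    using a Pendant Tree_reaches_Ring0 leaf_paths_tree_paths by auto
  ultimately show ?thesis by (meson converse_rtrancl_into_rtrancl)
qed (use Ring_reaches_Ring0 Tree_reaches_Ring0 in auto)

lemma rt_port_graph: "port_graph nodes nb (rt_deg k D lab) (rt_port D M) (Ring 0)"
  unfolding port_graph_def
  using finite_rt_nodes rt_nb_None_iff rt_nb_in rt_port_nb rt_nb_back rt_nb_neq rt_reaches_Ring0 params_M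
  by auto

end

definition labels_agree_on_branch ::
  "nat \<Rightarrow> nat \<Rightarrow> (nat \<Rightarrow> nat list \<Rightarrow> nat) \<Rightarrow> (nat \<Rightarrow> nat list \<Rightarrow> nat) \<Rightarrow> nat \<Rightarrow> nat \<Rightarrow> nat \<Rightarrow> bool" where
  "labels_agree_on_branch k D lab1 lab2 g g' b \<longleftrightarrow>
     (\<forall>L\<in>leaf_paths k D. last L = b \<longrightarrow> lab1 g L = lab2 g' L)"

definition labels_agree ::
  "nat \<Rightarrow> nat \<Rightarrow> (nat \<Rightarrow> nat list \<Rightarrow> nat) \<Rightarrow> (nat \<Rightarrow> nat list \<Rightarrow> nat) \<Rightarrow> nat \<Rightarrow> nat \<Rightarrow> bool" where
  "labels_agree k D lab1 lab2 g g' \<longleftrightarrow> (\<forall>L\<in>leaf_paths k D. lab1 g L = lab2 g' L)"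

lemma labels_agree_on_branchI: "labels_agree k D lab1 lab2 g g' \<Longrightarrow> labels_agree_on_branch k D lab1 lab2 g g' b"
  unfolding labels_agree_def labels_agree_on_branch_def by auto

text \<open>Ring nodes are at distance \<open>k + 1\<close> from every leaf, and a walk of length \<open>t \<le> k\<close> from a
  non-root tree node reaches only leaves of its own branch, as it would have to pass the root.\<close>

definition rt_sim ::
  "nat \<Rightarrow> nat \<Rightarrow> nat \<Rightarrow> (nat \<Rightarrow> nat list \<Rightarrow> nat) \<Rightarrow> (nat \<Rightarrow> nat list \<Rightarrow> nat) \<Rightarrow> nat \<Rightarrow> node \<Rightarrow> node \<Rightarrow> bool" where
  "rt_sim k D M lab1 lab2 t a b \<longleftrightarrow> t \<le> k \<and> a \<in> rt_nodes k D M lab1 \<and> b \<in> rt_nodes k D M lab2 \<and>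
    (case (a, b) of
       (Ring _, Ring _) \<Rightarrow> True
     | (Tree g ps, Tree g' ps') \<Rightarrow> ps' = ps \<and>
          (length ps + t < k \<or> (ps \<noteq> [] \<and> labels_agree_on_branch k D lab1 lab2 g g' (last ps))
           \<or> labels_agree k D lab1 lab2 g g')
     | (Pendant g L e, Pendant g' L' e') \<Rightarrow>
          L' = L \<and> e' = e \<and> labels_agree_on_branch k D lab1 lab2 g g' (last L)
     | _ \<Rightarrow> False)"

context
  fixes k D M :: nat and lab1 lab2 :: "nat \<Rightarrow> nat list \<Rightarrow> nat"
  assumes params1: "rt_params k D M lab1" and params2: "rt_params k D M lab2"
begin

abbreviation "sim \<equiv> rt_sim k D M lab1 lab2"
abbreviation "nb1 \<equiv> rt_nb k D M lab1"
abbreviation "nb2 \<equiv> rt_nb k D M lab2"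

lemma rt_sim_Tree_leaf:
  assumes "sim t (Tree g ps) (Tree g' ps)" "ps \<in> leaf_paths k D"
  shows "lab1 g ps = lab2 g' ps"
  using assms params_k[OF params1]
  by (auto simp: rt_sim_def leaf_paths_def labels_agree_def labels_agree_on_branch_def)

lemma rt_sim_deg: assumes "sim t a b" shows "rt_deg k D lab1 a = rt_deg k D lab2 b"
proof (cases a)
  case (Tree g ps)
  then obtain g' where b: "b = Tree g' ps" "ps \<in> tree_paths k D"
    using assms by (auto simp: rt_sim_def split: node.splits)
  then show ?thesis
    using Tree assms rt_sim_Tree_leaf[of t g ps g'] tree_paths_leaf[of ps k D] by auto
qed (use assms in \<open>auto simp: rt_sim_def split: node.splits\<close>)

lemma rt_sim_step_Ring:
  assumes sim: "sim t (Ring x) b" and t: "0 < t"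
    and a': "nb1 (Ring x) p = Some a'" and b': "nb2 b p = Some b'"
  shows "rt_port D M a' (Ring x) = rt_port D M b' b \<and> sim (t - 1) a' b'"
proof -
  obtain y where b: "b = Ring y" using sim by (auto simp: rt_sim_def split: node.splits)
  have "x < M" "y < M" "3 \<le> M" using sim b params_M[OF params1] by (auto simp: rt_sim_def)
  note facts = ring_mod_facts[OF \<open>x < M\<close> \<open>3 \<le> M\<close>] ring_mod_facts[OF \<open>y < M\<close> \<open>3 \<le> M\<close>]
  have in_nodes: "a' \<in> rt_nodes k D M lab1" "b' \<in> rt_nodes k D M lab2"
    using rt_nb_in[OF params1 _ a'] rt_nb_in[OF params2 _ b'] sim b by (auto simp: rt_sim_def)
  consider "p = 0" | "p = 1" | "p = 2" using a' by (auto split: if_splits)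
  then show ?thesis
  proof cases
    case 1
    then have "a' = Ring (Suc x mod M)" "b' = Ring (Suc y mod M)" using a' b' b by auto
    then show ?thesis using in_nodes sim b facts(6,14) by (auto simp: rt_sim_def)
  next
    case 2
    then have "a' = Ring ((x + M - 1) mod M)" "b' = Ring ((y + M - 1) mod M)" using a' b' b by auto
    then show ?thesis using in_nodes sim b facts(2,10) by (auto simp: rt_sim_def)
  next
    case 3
    then have "a' = Tree x []" "b' = Tree y []" using a' b' b by auto
    then show ?thesis using in_nodes sim b t by (auto simp: rt_sim_def)
  qed
qed

lemma rt_sim_step_root:
  assumes sim: "sim t (Tree g []) b" and t: "0 < t"
    and a': "nb1 (Tree g []) p = Some a'" and b': "nb2 b p = Some b'"
  shows "rt_port D M a' (Tree g []) = rt_port D M b' b \<and> sim (t - 1) a' b'"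
proof -
  obtain g' where b: "b = Tree g' []" and C: "t < k \<or> labels_agree k D lab1 lab2 g g'"
    using sim by (auto simp: rt_sim_def split: node.splits)
  have in_nodes: "a' \<in> rt_nodes k D M lab1" "b' \<in> rt_nodes k D M lab2"
    using rt_nb_in[OF params1 _ a'] rt_nb_in[OF params2 _ b'] sim b by (auto simp: rt_sim_def)
  consider "p < D" | "p = D" using a' by (auto split: if_splits)
  then show ?thesis
  proof cases
    case 1
    then have "a' = Tree g [p]" "b' = Tree g' [p]" using a' b' b by auto
    then show ?thesis using in_nodes sim t C b by (auto simp: rt_sim_def)
  next
    case 2
    then have "a' = Ring g" "b' = Ring g'" using a' b' b by auto
    then show ?thesis using in_nodes sim b by (auto simp: rt_sim_def)
  qed
qed

lemma rt_sim_step_Tree: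
  assumes sim: "sim t (Tree g ps) b" and t: "0 < t" and ps: "ps \<noteq> []"
    and a': "nb1 (Tree g ps) p = Some a'" and b': "nb2 b p = Some b'"
  shows "rt_port D M a' (Tree g ps) = rt_port D M b' b \<and> sim (t - 1) a' b'"
proof -
  obtain g' where b: "b = Tree g' ps" and C: "length ps + t < k \<or>
      labels_agree_on_branch k D lab1 lab2 g g' (last ps) \<or> labels_agree k D lab1 lab2 g g'"
    using sim ps by (auto simp: rt_sim_def split: node.splits)
  have in_nodes: "a' \<in> rt_nodes k D M lab1" "b' \<in> rt_nodes k D M lab2"
    using rt_nb_in[OF params1 _ a'] rt_nb_in[OF params2 _ b'] sim b by (auto simp: rt_sim_def)
  have branch: "labels_agree_on_branch k D lab1 lab2 g g' (last ps)" if "\<not> length ps + t < k"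
    using C that labels_agree_on_branchI by blast
  consider "p = 0" | "p \<noteq> 0" "length ps < k" | "p \<noteq> 0" "\<not> length ps < k" by blast
  then show ?thesis
  proof cases
    case 1
    then have e: "a' = Tree g (tl ps)" "b' = Tree g' (tl ps)" using a' b' b ps by auto
    have "length (tl ps) + (t - 1) < k \<or>
        (tl ps \<noteq> [] \<and> labels_agree_on_branch k D lab1 lab2 g g' (last (tl ps))) \<or>
        labels_agree k D lab1 lab2 g g'"
    proof (cases "tl ps = []")
      case True
      then show ?thesis using sim t by (auto simp: rt_sim_def)
    next
      case False
      then have "last (tl ps) = last ps" using ps by (cases ps) auto
      then show ?thesis using C False by auto
    qed
    then show ?thesis using e b in_nodes sim by (auto simp: rt_sim_def)
  next
    case 2
    then have "a' = Tree g ((p - 1) # ps)" "b' = Tree g' ((p - 1) # ps)"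
      using a' b' b ps by (auto split: if_splits)
    then show ?thesis using b in_nodes sim t ps C 2 by (auto simp: rt_sim_def)
  next
    case 3
    then have "a' = Pendant g ps (p - 1)" "b' = Pendant g' ps (p - 1)"
      using a' b' b ps by (auto split: if_splits)
    then show ?thesis using b in_nodes sim ps branch 3 by (auto simp: rt_sim_def)
  qed
qed

lemma rt_sim_step_Pendant:
  assumes sim: "sim t (Pendant g L e) b"
    and a': "nb1 (Pendant g L e) p = Some a'" and b': "nb2 b p = Some b'"
  shows "rt_port D M a' (Pendant g L e) = rt_port D M b' b \<and> sim (t - 1) a' b'"
proof -
  obtain g' where b: "b = Pendant g' L e" and C: "labels_agree_on_branch k D lab1 lab2 g g' (last L)"
    using sim by (auto simp: rt_sim_def split: node.splits)
  have "L \<noteq> []" using sim params_k[OF params1] by (auto simp: rt_sim_def leaf_paths_def)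
  moreover have "a' \<in> rt_nodes k D M lab1" "b' \<in> rt_nodes k D M lab2"
    using rt_nb_in[OF params1 _ a'] rt_nb_in[OF params2 _ b'] sim b by (auto simp: rt_sim_def)
  moreover have "a' = Tree g L" "b' = Tree g' L" using a' b' b by (auto split: if_splits)
  ultimately show ?thesis using sim C b by (auto simp: rt_sim_def)
qed

lemma rt_sim_graded_bisim:
  "graded_bisim sim nb1 (rt_deg k D lab1) (rt_port D M) nb2 (rt_deg k D lab2) (rt_port D M)"
proof -
  have "nb1 a p = None \<longleftrightarrow> nb2 b p = None" if sim: "sim t a b" for t a b p
  proof -
    have "a \<in> rt_nodes k D M lab1" "b \<in> rt_nodes k D M lab2" using sim by (auto simp: rt_sim_def)
    then show ?thesis
      using rt_nb_None_iff[OF params1] rt_nb_None_iff[OF params2] rt_sim_deg[OF sim] by simp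
  qed
  moreover have "rt_port D M a' a = rt_port D M b' b \<and> sim (t - 1) a' b'"
    if "sim t a b" "0 < t" "nb1 a p = Some a'" "nb2 b p = Some b'" for t a b p a' b'
  proof (cases a)
    case (Tree g ps)
    then show ?thesis using that rt_sim_step_root rt_sim_step_Tree by (cases "ps = []") auto
  qed (use that rt_sim_step_Ring rt_sim_step_Pendant in auto)
  ultimately show ?thesis unfolding graded_bisim_def using rt_sim_deg by blast
qed

lemma walk_view_eq_if_rt_sim:
  "sim t a b \<Longrightarrow> walk_view nb1 (rt_deg k D lab1) (rt_port D M) t a = walk_view nb2 (rt_deg k D lab2) (rt_port D M) t b"
  by (rule walk_view_eq_if_graded_bisim[OF rt_sim_graded_bisim])

end

fun branch_walk :: "nat list \<Rightarrow> (nat \<times> nat) list" where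
  "branch_walk [] = []"
| "branch_walk (c # ps) = (if ps = [] then [(c, 0)] else branch_walk ps @ [(Suc c, 0)])"

lemma length_branch_walk [simp]: "length (branch_walk ps) = length ps"
  by (induction ps) auto

lemma walk_branch_walk:
  "ps \<in> tree_paths k D \<Longrightarrow> walk (rt_nb k D M lab) (rt_port D M) (Tree g []) (branch_walk ps) = Some (Tree g ps)"
proof (induction ps)
  case (Cons c ps)
  then show ?case by (cases "ps = []") (auto simp: tree_paths_Cons walk_append)
qed simp

lemma walk_to_ring_iff_root:
  assumes "3 \<le> D"
  shows "walk (rt_nb k D M lab) (rt_port D M) a [(D, 2)] \<noteq> None \<longleftrightarrow> (\<exists>g. a = Tree g [])"
  using assms by (cases a) (auto split: if_splits)

section \<open>The family of graphs\<close>

definition leaf_labelings :: "nat \<Rightarrow> nat \<Rightarrow> (nat list \<Rightarrow> nat) set" where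
  "leaf_labelings k D = leaf_paths k D \<rightarrow>\<^sub>E {..D}"

definition num_types :: "nat \<Rightarrow> nat \<Rightarrow> nat" where
  "num_types k D = card (leaf_labelings k D)"

definition type_labeling :: "nat \<Rightarrow> nat \<Rightarrow> nat \<Rightarrow> nat list \<Rightarrow> nat" where
  "type_labeling k D = (SOME h. bij_betw h {..<num_types k D} (leaf_labelings k D))"

text \<open>In the graph number \<open>j\<close> ring position \<open>2 j\<close> carries type \<open>j\<close>, and every other type
  occupies two of the remaining positions.\<close>

definition ring_type :: "nat \<Rightarrow> nat \<Rightarrow> nat" where
  "ring_type j g = (if g \<le> 2 * j then g div 2 else (g + 1) div 2)"

definition ring_size :: "nat \<Rightarrow> nat \<Rightarrow> nat" where
  "ring_size k D = 2 * num_types k D - 1"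

text \<open>The \<open>min\<close> matters only at positions outside the ring, where it keeps \<open>rt_params\<close> valid.\<close>

definition fam_lab :: "nat \<Rightarrow> nat \<Rightarrow> nat \<Rightarrow> nat \<Rightarrow> nat list \<Rightarrow> nat" where
  "fam_lab k D j g L = min D (type_labeling k D (ring_type j g) L)"

lemma num_types_eq: "num_types k D = Suc D ^ (D ^ k)"
  unfolding num_types_def leaf_labelings_def
  using finite_leaf_paths card_leaf_paths by (simp add: card_PiE)

lemma type_labeling_bij: "bij_betw (type_labeling k D) {..<num_types k D} (leaf_labelings k D)"
proof -
  have "finite (leaf_labelings k D)"
    unfolding leaf_labelings_def using finite_leaf_paths by (intro finite_PiE) auto
  then have "\<exists>h. bij_betw h {..<num_types k D} (leaf_labelings k D)"
    using ex_bij_betw_nat_finite unfolding num_types_def by (metis atLeast0LessThan)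
  then show ?thesis unfolding type_labeling_def by (rule someI_ex)
qed

lemma type_labeling_in: "i < num_types k D \<Longrightarrow> type_labeling k D i \<in> leaf_labelings k D"
  using type_labeling_bij by (auto simp: bij_betw_def)

lemma type_labeling_le: "i < num_types k D \<Longrightarrow> L \<in> leaf_paths k D \<Longrightarrow> type_labeling k D i L \<le> D"
  using type_labeling_in[of i k D] unfolding leaf_labelings_def by (auto dest: PiE_mem)

lemma type_labeling_differ:
  assumes "i < num_types k D" "i' < num_types k D" "i \<noteq> i'"
  shows "\<exists>L\<in>leaf_paths k D. type_labeling k D i L \<noteq> type_labeling k D i' L"
  using assms type_labeling_bij type_labeling_in unfolding bij_betw_def inj_on_def leaf_labelings_def
  by (metis PiE_ext lessThan_iff)

text \<open>Changing the label of the leaf \<open>replicate k b'\<close>, \<open>b' \<noteq> b\<close>, gives another type that agrees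
  on branch \<open>b\<close>.\<close>

lemma type_labeling_branch_twin:
  assumes i: "i < num_types k D" and b: "b < D" and k: "1 \<le> k" and D: "2 \<le> D"
  shows "\<exists>i' < num_types k D. i' \<noteq> i \<and>
           (\<forall>L\<in>leaf_paths k D. last L = b \<longrightarrow> type_labeling k D i' L = type_labeling k D i L)"
proof -
  define f where "f = type_labeling k D i"
  define b' where "b' = (if b = 0 then 1 else 0::nat)"
  define L0 where "L0 = replicate k b'"
  have L0: "L0 \<in> leaf_paths k D" "last L0 \<noteq> b"
    using D k unfolding L0_def leaf_paths_def b'_def by (auto simp: last_replicate)
  define f' where "f' = f(L0 := (f L0 + 1) mod Suc D)"
  have f: "f \<in> leaf_labelings k D" unfolding f_def using type_labeling_in[OF i] .
  then have "f' \<in> leaf_labelings k D" "f L0 \<le> D"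
    using L0 unfolding f'_def leaf_labelings_def PiE_iff extensional_def by auto
  moreover have "f' L0 \<noteq> f L0"
    using \<open>f L0 \<le> D\<close> D unfolding f'_def by (cases "f L0 = D") auto
  ultimately obtain i' where i': "i' < num_types k D" "type_labeling k D i' = f'" "f' \<noteq> f"
    using type_labeling_bij unfolding bij_betw_def by (metis imageE lessThan_iff)
  then show ?thesis using L0 unfolding f'_def f_def by auto
qed

lemma ring_type_less: "g < 2 * N - 1 \<Longrightarrow> j < N \<Longrightarrow> ring_type j g < N"
  unfolding ring_type_def by auto

lemma ring_type_eq_iff: "g < 2 * N - 1 \<Longrightarrow> j < N \<Longrightarrow> ring_type j g = j \<longleftrightarrow> g = 2 * j"
  unfolding ring_type_def by auto

lemma ring_type_self [simp]: "ring_type j (2 * j) = j"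
  unfolding ring_type_def by simp

lemma ring_type_twice:
  assumes "i < N" "j < N" "i \<noteq> j"
  shows "\<exists>g1 g2. g1 < 2 * N - 1 \<and> g2 < 2 * N - 1 \<and> g1 \<noteq> g2 \<and> ring_type j g1 = i \<and> ring_type j g2 = i"
proof (cases "i < j")
  case True
  then show ?thesis using assms
    by (intro exI[of _ "2 * i"] exI[of _ "2 * i + 1"]) (auto simp: ring_type_def)
next
  case False
  then show ?thesis using assms
    by (intro exI[of _ "2 * i - 1"] exI[of _ "2 * i"]) (auto simp: ring_type_def)
qed

lemma rt_params_fam_lab:
  assumes "1 \<le> k" "4 \<le> D"
  shows "rt_params k D (ring_size k D) (fam_lab k D j)"
proof -
  have "Suc D ^ 1 \<le> Suc D ^ (D ^ k)" using assms by (intro power_increasing) auto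
  then have "2 \<le> num_types k D" unfolding num_types_eq using assms by simp
  then have "3 \<le> ring_size k D" unfolding ring_size_def by simp
  then show ?thesis using assms unfolding rt_params_def fam_lab_def by simp
qed

lemma fam_lab_eq:
  "g < ring_size k D \<Longrightarrow> j < num_types k D \<Longrightarrow> L \<in> leaf_paths k D \<Longrightarrow>
   fam_lab k D j g L = type_labeling k D (ring_type j g) L"
  unfolding fam_lab_def ring_size_def using type_labeling_le ring_type_less by (metis min_absorb2)

context
  fixes k D :: nat
  assumes k: "1 \<le> k" and D: "4 \<le> D"
begin

abbreviation "N \<equiv> num_types k D"
abbreviation "M \<equiv> ring_size k D"
abbreviation "fam_nodes j \<equiv> rt_nodes k D M (fam_lab k D j)"
abbreviation "fam_view j \<equiv> walk_view (rt_nb k D M (fam_lab k D j)) (rt_deg k D (fam_lab k D j)) (rt_port D M)"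

lemma M_eq: "M = 2 * N - 1"
  unfolding ring_size_def by simp

lemma fam_params: "rt_params k D M (fam_lab k D j)"
  using rt_params_fam_lab[OF k D] .

lemma root_in_fam_nodes: "g < M \<Longrightarrow> Tree g [] \<in> fam_nodes j"
  by (simp add: tree_paths_def)

lemma fam_root_view_unique:
  assumes j: "j < N" and a: "a \<in> fam_nodes j" and ne: "a \<noteq> Tree (2 * j) []"
  shows "fam_view j k a \<noteq> fam_view j k (Tree (2 * j) [])"
proof
  assume eq: "fam_view j k a = fam_view j k (Tree (2 * j) [])"
  have "([(D, 2)], 3) \<in> fam_view j k (Tree (2 * j) [])" using k by (auto simp: walk_view_mem)
  then have "([(D, 2)], 3) \<in> fam_view j k a" using eq by simp
  then have "walk (rt_nb k D M (fam_lab k D j)) (rt_port D M) a [(D, 2)] \<noteq> None"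
    unfolding walk_view_mem by auto
  moreover have "3 \<le> D" using D by simp
  ultimately obtain g where ag: "a = Tree g []" using walk_to_ring_iff_root by blast
  then have g: "g < M" "ring_type j g \<noteq> j" using a ne j ring_type_eq_iff M_eq by auto
  then obtain L where L: "L \<in> leaf_paths k D"
    and differ: "type_labeling k D (ring_type j g) L \<noteq> type_labeling k D j L"
    using type_labeling_differ[OF ring_type_less j] j M_eq by metis
  have walks: "walk (rt_nb k D M (fam_lab k D j)) (rt_port D M) (Tree h []) (branch_walk L) = Some (Tree h L)" for h
    using walk_branch_walk leaf_paths_tree_paths[OF L] by blast
  have "length L = k" using L by (simp add: leaf_paths_def)
  then have "(branch_walk L, Suc (fam_lab k D j (2 * j) L)) \<in> fam_view j k a"
    using eq walks by (auto simp: walk_view_mem)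
  then have "fam_lab k D j (2 * j) L = fam_lab k D j g L"
    using ag walks \<open>length L = k\<close> by (auto simp: walk_view_mem)
  moreover have "2 * j < M" using j M_eq by linarith
  ultimately show False using differ fam_lab_eq[OF g(1) j L] fam_lab_eq[OF _ j L] by simp
qed

lemma fam_same_labels_elsewhere:
  assumes j: "j < N" and g: "g < M" "g \<noteq> 2 * j"
  shows "\<exists>g2 < M. g2 \<noteq> g \<and> labels_agree k D (fam_lab k D j) (fam_lab k D j) g g2"
proof -
  have "ring_type j g < N" "ring_type j g \<noteq> j" using g j ring_type_less ring_type_eq_iff M_eq by auto
  then obtain g1 g2 where "g1 < M" "g2 < M" "g1 \<noteq> g2" "ring_type j g1 = ring_type j g" "ring_type j g2 = ring_type j g"
    using ring_type_twice j M_eq by metis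
  then show ?thesis unfolding labels_agree_def fam_lab_def by (metis (full_types))
qed

lemma fam_same_branch_elsewhere:
  assumes j: "j < N" and g: "g < M" and b: "b < D"
  shows "\<exists>g2 < M. g2 \<noteq> g \<and> labels_agree_on_branch k D (fam_lab k D j) (fam_lab k D j) g g2 b"
proof (cases "g = 2 * j")
  case True
  obtain i' where i': "i' < N" "i' \<noteq> j"
    and branch: "\<forall>L\<in>leaf_paths k D. last L = b \<longrightarrow> type_labeling k D i' L = type_labeling k D j L"
    using type_labeling_branch_twin[OF j b k] D by auto
  obtain g1 where "g1 < M" "ring_type j g1 = i'" using ring_type_twice[OF i'(1) j i'(2)] M_eq by metis
  moreover have "g1 \<noteq> 2 * j" using \<open>ring_type j g1 = i'\<close> i'(2) by auto
  ultimately show ?thesis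
    using True branch unfolding labels_agree_on_branch_def fam_lab_def by auto
next
  case False
  then show ?thesis using fam_same_labels_elsewhere[OF j g] labels_agree_on_branchI by blast
qed

lemma fam_twin:
  assumes j: "j < N" and a: "a \<in> fam_nodes j" and ne: "a \<noteq> Tree (2 * j) []"
  shows "\<exists>b\<in>fam_nodes j. b \<noteq> a \<and> fam_view j k b = fam_view j k a"
proof -
  let ?sim = "rt_sim k D M (fam_lab k D j) (fam_lab k D j) k"
  have "\<exists>b\<in>fam_nodes j. b \<noteq> a \<and> ?sim a b"
  proof (cases a)
    case (Ring y)
    then have "y < M" "3 \<le> M" using a params_M[OF fam_params] by auto
    then show ?thesis using Ring ring_mod_facts[of y M]
      by (intro bexI[of _ "Ring (Suc y mod M)"]) (auto simp: rt_sim_def)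
  next
    case (Tree g ps)
    show ?thesis
    proof (cases "ps = []")
      case True
      then obtain g2 where "g2 < M" "g2 \<noteq> g" "labels_agree k D (fam_lab k D j) (fam_lab k D j) g g2"
        using fam_same_labels_elsewhere[OF j] a ne Tree by auto
      then show ?thesis using a Tree True by (intro bexI[of _ "Tree g2 ps"]) (auto simp: rt_sim_def)
    next
      case False
      then have "last ps \<in> set ps" by simp
      then have "last ps < D" using a Tree by (auto simp: tree_paths_def)
      then obtain g2 where "g2 < M" "g2 \<noteq> g"
        "labels_agree_on_branch k D (fam_lab k D j) (fam_lab k D j) g g2 (last ps)"
        using fam_same_branch_elsewhere[OF j] a Tree by auto
      then show ?thesis using a Tree False by (intro bexI[of _ "Tree g2 ps"]) (auto simp: rt_sim_def)
    qed
  next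
    case (Pendant g L e)
    then have L: "L \<in> leaf_paths k D" "L \<noteq> []" using a k by (auto simp: leaf_paths_def)
    then have "set L \<subseteq> {..<D}" by (simp add: leaf_paths_def)
    then have "last L < D" using last_in_set[OF L(2)] by blast
    then obtain g2 where "g2 < M" "g2 \<noteq> g"
      and agree: "labels_agree_on_branch k D (fam_lab k D j) (fam_lab k D j) g g2 (last L)"
      using fam_same_branch_elsewhere[OF j] a Pendant by auto
    moreover have "fam_lab k D j g2 L = fam_lab k D j g L"
      using agree L unfolding labels_agree_on_branch_def by simp
    ultimately show ?thesis using a Pendant by (intro bexI[of _ "Pendant g2 L e"]) (auto simp: rt_sim_def)
  qed
  then show ?thesis using walk_view_eq_if_rt_sim[OF fam_params fam_params] by metis
qed

lemma fam_twin_pred: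
  assumes j: "j < N" and a: "a \<in> fam_nodes j"
  shows "\<exists>b\<in>fam_nodes j. b \<noteq> a \<and> fam_view j (k - 1) b = fam_view j (k - 1) a"
proof (cases "a = Tree (2 * j) []")
  case True
  let ?g = "if j = 0 then 1 else 0::nat"
  have "?g < M" using params_M[OF fam_params] by auto
  then have "rt_sim k D M (fam_lab k D j) (fam_lab k D j) (k - 1) (Tree ?g []) a"
    using True j M_eq k by (auto simp: rt_sim_def tree_paths_def)
  then have "fam_view j (k - 1) (Tree ?g []) = fam_view j (k - 1) a"
    by (rule walk_view_eq_if_rt_sim[OF fam_params fam_params])
  moreover have "Tree ?g [] \<noteq> a" using True by auto
  ultimately show ?thesis using root_in_fam_nodes[OF \<open>?g < M\<close>] by blast
next
  case False
  then obtain b where "b \<in> fam_nodes j" "b \<noteq> a" "fam_view j k b = fam_view j k a"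
    using fam_twin[OF j a] by blast
  moreover have "fam_view j (k - 1) b = fam_view j (k - 1) a"
    using walk_view_eq_mono[OF \<open>fam_view j k b = fam_view j k a\<close>] by simp
  ultimately show ?thesis by blast
qed

lemma fam_max_deg: "Max (rt_deg k D (fam_lab k D j) ` fam_nodes j) = Suc D"
proof (rule Max_eqI)
  show "finite (rt_deg k D (fam_lab k D j) ` fam_nodes j)" using finite_rt_nodes by simp
  have "rt_deg k D (fam_lab k D j) a \<le> Suc D" for a
    using D by (cases a) (auto simp: fam_lab_def)
  then show "d \<le> Suc D" if "d \<in> rt_deg k D (fam_lab k D j) ` fam_nodes j" for d
    using that by auto
  have "Tree 0 [] \<in> fam_nodes j" using params_M[OF fam_params] by (simp add: tree_paths_def)
  moreover have "rt_deg k D (fam_lab k D j) (Tree 0 []) = Suc D" using k by simp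
  ultimately show "Suc D \<in> rt_deg k D (fam_lab k D j) ` fam_nodes j" by (metis imageI)
qed

lemma fam_root_copies:
  assumes i: "i < N" and j: "j < N" and ij: "i \<noteq> j"
  shows "\<exists>b1\<in>fam_nodes j. \<exists>b2\<in>fam_nodes j. b1 \<noteq> b2 \<and>
           fam_view j k b1 = fam_view i k (Tree (2 * i) []) \<and> fam_view j k b2 = fam_view i k (Tree (2 * i) [])"
proof -
  obtain g1 g2 where g: "g1 < M" "g2 < M" "g1 \<noteq> g2" "ring_type j g1 = i" "ring_type j g2 = i"
    using ring_type_twice[OF i j ij] M_eq by metis
  have V: "fam_view i k (Tree (2 * i) []) = fam_view j k (Tree g [])" if "g < M" "ring_type j g = i" for g
  proof (rule walk_view_eq_if_rt_sim[OF fam_params fam_params])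
    show "rt_sim k D M (fam_lab k D i) (fam_lab k D j) k (Tree (2 * i) []) (Tree g [])"
      using that i M_eq by (auto simp: rt_sim_def tree_paths_def labels_agree_def fam_lab_def)
  qed
  then have "fam_view j k (Tree g1 []) = fam_view i k (Tree (2 * i) [])"
    "fam_view j k (Tree g2 []) = fam_view i k (Tree (2 * i) [])"
    using V[OF g(1,4)] V[OF g(2,5)] by simp_all
  moreover have "Tree g1 [] \<in> fam_nodes j" "Tree g2 [] \<in> fam_nodes j" "Tree g1 [] \<noteq> Tree g2 []"
    using g root_in_fam_nodes by auto
  ultimately show ?thesis by blast
qed

end

definition fam_graph :: "nat \<Rightarrow> nat \<Rightarrow> nat \<Rightarrow> pgraph" where
  "fam_graph k D j =
     to_pgraph (rt_nodes k D (ring_size k D) (fam_lab k D j)) (rt_nb k D (ring_size k D) (fam_lab k D j))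
       (rt_port D (ring_size k D))"

definition fam_leader :: "nat \<Rightarrow> nat \<Rightarrow> nat \<Rightarrow> nat" where
  "fam_leader k D j = node_code (rt_nodes k D (ring_size k D) (fam_lab k D j)) (Tree (2 * j) [])"

context
  fixes k D :: nat
  assumes k: "1 \<le> k" and D: "4 \<le> D"
begin

lemma fam_port_graph:
  "port_graph (fam_nodes k D j) (rt_nb k D (ring_size k D) (fam_lab k D j)) (rt_deg k D (fam_lab k D j))
     (rt_port D (ring_size k D)) (Ring 0)"
  using rt_port_graph[OF fam_params[OF k D]] .

lemma root_in_fam: "j < num_types k D \<Longrightarrow> Tree (2 * j) [] \<in> fam_nodes k D j"
  using M_eq[OF k D] by (simp add: tree_paths_def)

lemma view_trunc_fam_graph:
  "a \<in> fam_nodes k D j \<Longrightarrow> view_trunc (fam_graph k D j) t (node_code (fam_nodes k D j) a) = fam_view k D j t a"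
  unfolding fam_graph_def using port_graph.view_trunc_G_enc[OF fam_port_graph] .

lemma fam_graph_props:
  assumes j: "j < num_types k D"
  shows "wf_pgraph (fam_graph k D j) \<and> feasible (fam_graph k D j) \<and>
         maxdeg (fam_graph k D j) = Suc D \<and> selection_index (fam_graph k D j) = k"
  unfolding fam_graph_def
proof (intro conjI)
  show "feasible (to_pgraph (fam_nodes k D j) (rt_nb k D (ring_size k D) (fam_lab k D j)) (rt_port D (ring_size k D)))"
    by (rule port_graph.feasible_G_if_unique_view[OF fam_port_graph root_in_fam[OF j]])
      (use fam_root_view_unique[OF k D j] in blast)
  show "selection_index (to_pgraph (fam_nodes k D j) (rt_nb k D (ring_size k D) (fam_lab k D j)) (rt_port D (ring_size k D))) = k"
    by (rule port_graph.selection_index_G[OF fam_port_graph root_in_fam[OF j] _ _ k])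
      (use fam_root_view_unique[OF k D j] fam_twin_pred[OF k D j] in blast)+
qed (use port_graph.wf_pgraph_G[OF fam_port_graph] port_graph.maxdeg_G[OF fam_port_graph]
       fam_max_deg[OF k D] in simp_all)

lemma fam_leader_elected:
  assumes j: "j < num_types k D" and sol: "solves_selection_in A Orc (fam_graph k D j) k"
  shows "sel_output A Orc (fam_graph k D j) (fam_leader k D j) = Some True \<and>
         (\<exists>t0\<le>k. A (Orc (fam_graph k D j)) (view_trunc (fam_graph k D j) t0 (fam_leader k D j)) \<noteq> None)"
proof -
  interpret port_graph "fam_nodes k D j" "rt_nb k D (ring_size k D) (fam_lab k D j)" "rt_deg k D (fam_lab k D j)"
      "rt_port D (ring_size k D)" "Ring 0"
    by (rule fam_port_graph)
  have G: "fam_graph k D j = G" unfolding fam_graph_def ..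
  obtain l where l: "l < card (fam_nodes k D j)" "sel_output A Orc G l = Some True"
    and uniq: "\<forall>v<card (fam_nodes k D j). v \<noteq> l \<longrightarrow> view_trunc G k v \<noteq> view_trunc G k l"
    using leader_has_unique_view[OF sol] G by auto
  have "dec l = Tree (2 * j) []"
  proof (rule ccontr)
    assume "dec l \<noteq> Tree (2 * j) []"
    then obtain b where "b \<in> fam_nodes k D j" "b \<noteq> dec l" "fam_view k D j k b = fam_view k D j k (dec l)"
      using fam_twin[OF k D j dec_in[OF l(1)]] by blast
    then show False using uniq l(1) view_trunc_G[OF l(1)] view_trunc_G_enc by (metis dec_enc enc_less)
  qed
  then have "l = fam_leader k D j" unfolding fam_leader_def using l(1) by (metis enc_dec)
  then show ?thesis using l sol G unfolding solves_selection_in_def by auto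
qed

text \<open>If graphs \<open>i \<noteq> j\<close> got the same advice, the two copies of the type-\<open>j\<close> root in graph \<open>i\<close>
  would both behave like the leader of graph \<open>j\<close>.\<close>

lemma fam_advice_inj:
  assumes sol: "\<forall>j<num_types k D. solves_selection_in A Orc (fam_graph k D j) k"
  shows "inj_on (\<lambda>j. Orc (fam_graph k D j)) {..<num_types k D}"
proof (rule inj_onI, rule ccontr)
  fix i j assume "i \<in> {..<num_types k D}" "j \<in> {..<num_types k D}" and same: "Orc (fam_graph k D i) = Orc (fam_graph k D j)"
    and "i \<noteq> j"
  then have i: "i < num_types k D" and j: "j < num_types k D" by auto
  obtain t0 where leader: "sel_output A Orc (fam_graph k D j) (fam_leader k D j) = Some True"
    and t0: "t0 \<le> k" "A (Orc (fam_graph k D j)) (view_trunc (fam_graph k D j) t0 (fam_leader k D j)) \<noteq> None"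
    using fam_leader_elected[OF j] sol j by blast
  obtain b1 b2 where b: "b1 \<in> fam_nodes k D i" "b2 \<in> fam_nodes k D i" "b1 \<noteq> b2"
    "fam_view k D i k b1 = fam_view k D j k (Tree (2 * j) [])" "fam_view k D i k b2 = fam_view k D j k (Tree (2 * j) [])"
    using fam_root_copies[OF k D j i] \<open>i \<noteq> j\<close> by metis
  let ?code = "node_code (fam_nodes k D i)"
  have elected: "?code b \<in> {v. v < pg_n (fam_graph k D i) \<and> sel_output A Orc (fam_graph k D i) v = Some True}"
    if "b \<in> fam_nodes k D i" "fam_view k D i k b = fam_view k D j k (Tree (2 * j) [])" for b
  proof -
    have "view_trunc (fam_graph k D j) k (fam_leader k D j) = view_trunc (fam_graph k D i) k (?code b)"
      using that view_trunc_fam_graph[OF root_in_fam[OF j]] view_trunc_fam_graph[OF that(1)]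
      unfolding fam_leader_def by simp
    then have "sel_output A Orc (fam_graph k D j) (fam_leader k D j) = sel_output A Orc (fam_graph k D i) (?code b)"
      using sel_output_eq_if_view_trunc_eq[of "fam_graph k D j" k "fam_leader k D j" "fam_graph k D i" "?code b"
          t0 A "Orc (fam_graph k D j)" Orc] t0 same by simp
    then have "sel_output A Orc (fam_graph k D i) (?code b) = Some True" using leader by simp
    then show ?thesis
      using that port_graph.enc_less[OF fam_port_graph] port_graph.pg_n_G[OF fam_port_graph]
      unfolding fam_graph_def by simp
  qed
  have "card {v. v < pg_n (fam_graph k D i) \<and> sel_output A Orc (fam_graph k D i) v = Some True} = 1"
    using sol i unfolding solves_selection_in_def by blast
  then have "?code b1 = ?code b2" using elected[OF b(1,4)] elected[OF b(2,5)] by (metis card_1_singletonE singletonD)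
  then show False using port_graph.enc_inj[OF fam_port_graph b(1) b(2)] b(3) by simp
qed

end

section \<open>Counting advice strings\<close>

lemma inj_on_bool_lists_long:
  fixes f :: "nat \<Rightarrow> bool list"
  assumes inj: "inj_on f {..<n}" and n: "2 ^ L \<le> n"
  shows "\<exists>j<n. L \<le> length (f j)"
proof (rule ccontr)
  assume short: "\<not> (\<exists>j<n. L \<le> length (f j))"
  have "(1::nat) \<le> 2 ^ L" by simp
  then have "0 < L" using short n by (cases L) auto
  have "f ` {..<n} \<subseteq> {xs. set xs \<subseteq> UNIV \<and> length xs \<le> L - 1}" using short by force
  then have "card (f ` {..<n}) \<le> card {xs :: bool list. set xs \<subseteq> UNIV \<and> length xs \<le> L - 1}"
    by (intro card_mono finite_lists_length_le) auto
  also have "\<dots> = (\<Sum>i\<le>L - 1. 2 ^ i)" using card_lists_length_le[of "UNIV :: bool set" "L - 1"] by simp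
  also have "\<dots> = (\<Sum>i=0..<L. 2 ^ i)" using \<open>0 < L\<close> by (metis Suc_diff_1 atLeast0LessThan lessThan_Suc_atMost)
  also have "\<dots> = 2 ^ L - 1" by (rule sum_power2)
  finally have "n \<le> 2 ^ L - 1" using card_image[OF inj] by simp
  then show False using n \<open>1 \<le> 2 ^ L\<close> by linarith
qed

lemma ln_le_two_floor_log:
  assumes "2 \<le> n"
  shows "ln (real n) \<le> 2 * real (floor_log n)"
proof -
  have q: "1 \<le> floor_log n" using assms floor_log_exp2_gt[of n] by (cases "floor_log n") auto
  have "n < 2 ^ Suc (floor_log n)" using floor_log_exp2_gt[of n] by simp
  then have "real n < real (2 ^ Suc (floor_log n))" by (simp only: of_nat_less_iff)
  then have "real n < 2 ^ Suc (floor_log n)" by simp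
  then have "ln (real n) < ln (2 ^ Suc (floor_log n))" using assms by simp
  also have "\<dots> = real (Suc (floor_log n)) * ln 2" by (rule ln_realpow)
  also have "\<dots> \<le> real (Suc (floor_log n))" using ln_2_less_1 by simp
  finally show ?thesis using q by simp
qed

lemma long_advice_in_family:
  assumes k: "1 \<le> k" and D: "4 \<le> D"
    and sol: "\<forall>G. wf_pgraph G \<and> feasible G \<longrightarrow> solves_selection_in A Orc G (selection_index G)"
  shows "\<exists>j<num_types k D. floor_log (Suc D) * D ^ k \<le> length (Orc (fam_graph k D j))"
proof -
  have "\<forall>j<num_types k D. solves_selection_in A Orc (fam_graph k D j) k"
    using sol fam_graph_props[OF k D] by metis
  then have inj: "inj_on (\<lambda>j. Orc (fam_graph k D j)) {..<num_types k D}"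
    by (rule fam_advice_inj[OF k D])
  have "(2::nat) ^ (floor_log (Suc D) * D ^ k) = (2 ^ floor_log (Suc D)) ^ (D ^ k)"
    by (simp add: power_mult)
  also have "\<dots> \<le> num_types k D"
    unfolding num_types_eq by (intro power_mono floor_log_exp2_le) auto
  finally show ?thesis using inj_on_bool_lists_long[OF inj] by blast
qed

theorem mainTheorem4:
  shows "\<exists>c::real. c > 0 \<and>
    (\<forall>(A :: algorithm) (Orc :: advice_map).
       (\<forall>G. wf_pgraph G \<and> feasible G \<longrightarrow> solves_selection_in A Orc G (selection_index G)) \<longrightarrow>
       (\<forall>k::nat. \<forall>\<Delta>::nat. k \<ge> 1 \<and> \<Delta> \<ge> 5 \<longrightarrow>
          (\<exists>G. wf_pgraph G \<and> feasible G \<and> maxdeg G = \<Delta> \<and> selection_index G = k \<and>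
               real (length (Orc G)) \<ge> c * (real \<Delta> - 1) ^ k * ln (real \<Delta>))))"
proof (intro exI[of _ "1/2"] conjI allI impI)
  fix A :: algorithm and Orc :: advice_map and k \<Delta> :: nat
  assume sol: "\<forall>G. wf_pgraph G \<and> feasible G \<longrightarrow> solves_selection_in A Orc G (selection_index G)"
    and k\<Delta>: "k \<ge> 1 \<and> \<Delta> \<ge> 5"
  define D where "D = \<Delta> - 1"
  have k: "1 \<le> k" and D: "4 \<le> D" and \<Delta>: "\<Delta> = Suc D" using k\<Delta> unfolding D_def by auto
  obtain j where j: "j < num_types k D" and long: "floor_log \<Delta> * D ^ k \<le> length (Orc (fam_graph k D j))"
    using long_advice_in_family[OF k D sol] \<Delta> by blast
  have ln: "ln (real \<Delta>) \<le> 2 * real (floor_log \<Delta>)" using ln_le_two_floor_log k\<Delta> by simp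
  have "1/2 * (real \<Delta> - 1) ^ k * ln (real \<Delta>) = 1/2 * real D ^ k * ln (real \<Delta>)" using \<Delta> by simp
  also have "\<dots> \<le> 1/2 * real D ^ k * (2 * real (floor_log \<Delta>))" using ln by (intro mult_left_mono) auto
  also have "\<dots> = real (floor_log \<Delta> * D ^ k)" by simp
  also have "\<dots> \<le> real (length (Orc (fam_graph k D j)))" using long by (simp only: of_nat_le_iff)
  finally show "\<exists>G. wf_pgraph G \<and> feasible G \<and> maxdeg G = \<Delta> \<and> selection_index G = k \<and>
      real (length (Orc G)) \<ge> 1/2 * (real \<Delta> - 1) ^ k * ln (real \<Delta>)"
    using fam_graph_props[OF k D j] \<Delta> by blast
qed simp

end
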